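(* Let $(X,\mathscr B,\mu,T)$ be a measure-preserving system and fix the system of coefficients $c_S^n=2^{-n}$. Then $\sup_\alpha \operatorname{Asc}_\mu(X,\alpha,T)=h_\mu(X,T)$, where the supremum is over all finite measurable partitions $\alpha$ of $X$.
   Context: A measure-preserving system is a complete probability space $(X,\mathscr B,\mu)$ with a bijection $T:X\to X$ such that $T,T^{-1}$ are measurable and preserve $\mu$. Notation: $n^*=\{0,\dots,n-1\}$; for a finite measurable partition $\alpha$ and $S\subset n^*$, $\alpha_S=\bigvee_{i\in S}T^{-i}\alpha$ (trivial partition if $S=\emptyset$); $H_\mu(\alpha)=-\sum_{A\in\alpha}\mu(A)\log\mu(A)$. The measure-theoretic average sample complexity is $\operatorname{Asc}_\mu(X,\alpha,T)=\lim_{n\to\infty}\frac1n\sum_{S\subset n^*}c_S^nH_\mu(\alpha_S)$ (the limit exists). $h_\mu(X,T)$ denotes the usual Kolmogorov–Sinai entropy. *)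

theory Defs
  imports "HOL-Probability.Probability"
begin

definition mps :: "'a measure \<Rightarrow> ('a \<Rightarrow> 'a) \<Rightarrow> bool" where
  "mps M T \<longleftrightarrow> prob_space M \<and> complete_measure M \<and>
     bij_betw T (space M) (space M) \<and>
     T \<in> M \<rightarrow>\<^sub>M M \<and> inv_into (space M) T \<in> M \<rightarrow>\<^sub>M M \<and>
     distr M M T = M \<and> distr M M (inv_into (space M) T) = M"

definition fin_meas_partition :: "'a measure \<Rightarrow> 'a set set \<Rightarrow> bool" where
  "fin_meas_partition M \<alpha> \<longleftrightarrow> finite \<alpha> \<and> \<alpha> \<subseteq> sets M \<and> \<Union>\<alpha> = space M \<and>
     (\<forall>A\<in>\<alpha>. \<forall>B\<in>\<alpha>. A \<noteq> B \<longrightarrow> A \<inter> B = {})"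

text \<open>alpha_S = join over i in S of T^{-i} alpha; the trivial partition {X} if S is empty.\<close>
definition part_join :: "'a measure \<Rightarrow> ('a \<Rightarrow> 'a) \<Rightarrow> 'a set set \<Rightarrow> nat set \<Rightarrow> 'a set set" where
  "part_join M T \<alpha> S = {space M \<inter> (\<Inter>i\<in>S. (T ^^ i) -` (f i)) | f. \<forall>i\<in>S. f i \<in> \<alpha>}"

text \<open>Shannon entropy of a partition (natural logarithm; 0 log 0 = 0).\<close>
definition part_entropy :: "'a measure \<Rightarrow> 'a set set \<Rightarrow> real" where
  "part_entropy M \<alpha> = - (\<Sum>A\<in>\<alpha>. measure M A * ln (measure M A))"

definition Asc :: "'a measure \<Rightarrow> 'a set set \<Rightarrow> ('a \<Rightarrow> 'a) \<Rightarrow> real" where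
  "Asc M \<alpha> T = lim (\<lambda>n. (1 / real n) *
      (\<Sum>S\<in>Pow {..<n}. (1 / 2 ^ n) * part_entropy M (part_join M T \<alpha> S)))"

definition ks_entropy_part :: "'a measure \<Rightarrow> ('a \<Rightarrow> 'a) \<Rightarrow> 'a set set \<Rightarrow> real" where
  "ks_entropy_part M T \<alpha> = lim (\<lambda>n. part_entropy M (part_join M T \<alpha> {..<n}) / real n)"

definition ks_entropy :: "'a measure \<Rightarrow> ('a \<Rightarrow> 'a) \<Rightarrow> ereal" where
  "ks_entropy M T = (SUP \<alpha>\<in>{\<alpha>. fin_meas_partition M \<alpha>}. ereal (ks_entropy_part M T \<alpha>))"

end

theory Submission
  imports Defs
begin

text \<open>
  Each sampled entropy \<open>H(\<alpha>\<^sub>S)\<close> with \<open>S \<subseteq> n*\<close> is at most \<open>H(\<alpha>\<^sub>n\<^sub>*)\<close>, so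
  \<open>Asc(\<alpha>) \<le> h(\<alpha>)\<close>. Conversely, for \<open>\<beta> = \<alpha>\<^sub>k\<^sub>*\<close> the partition \<open>\<beta>\<^sub>S\<close> refines
  \<open>\<alpha>\<^sub>S\<^sub>+\<^sub>k\<^sub>*\<close>, and the times in \<open>n*\<close> left uncovered by \<open>S + k*\<close> cost at most
  \<open>H(\<alpha>)\<close> each. For a uniformly random \<open>S \<subseteq> n*\<close> a time \<open>i \<ge> k\<close> is uncovered with
  probability \<open>2\<^sup>-\<^sup>k\<close>, whence \<open>H(\<alpha>\<^sub>n\<^sub>*) \<le> \<Sum>\<^sub>S 2\<^sup>-\<^sup>n H(\<beta>\<^sub>S) + H(\<alpha>)(k + n 2\<^sup>-\<^sup>k)\<close> and
  \<open>h(\<alpha>) \<le> Asc(\<beta>) + H(\<alpha>) 2\<^sup>-\<^sup>k\<close>. Both normalised limits exist by Fekete's lemma: the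
  two sequences are subadditive because joins are subadditive for entropy and
  \<open>T\<close> preserves \<open>\<mu>\<close>.
\<close>

section \<open>Fekete's lemma\<close>

lemma subadditive_mult_add:
  fixes a :: "nat \<Rightarrow> real"
  assumes sub: "\<And>m n. a (m + n) \<le> a m + a n"
  shows "a (q * m + r) \<le> real q * a m + a r"
proof (induction q)
  case (Suc q)
  have "a (Suc q * m + r) = a (m + (q * m + r))" by (simp add: algebra_simps)
  also have "\<dots> \<le> a m + a (q * m + r)" by (rule sub)
  finally show ?case using Suc by (simp add: algebra_simps)
qed simp

lemma subadditive_quotient_le:
  fixes a :: "nat \<Rightarrow> real"
  assumes nonneg: "\<And>n. 0 \<le> a n" and sub: "\<And>m n. a (m + n) \<le> a m + a n"
    and "m > 0" "n > 0"
  shows "a n / n \<le> a m / m + (\<Sum>i<m. a i) / n"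
proof -
  define q r where "q = n div m" and "r = n mod m"
  have n_eq: "n = q * m + r" unfolding q_def r_def by simp
  have "a r \<le> (\<Sum>i<m. a i)"
    unfolding r_def using \<open>m > 0\<close> nonneg by (intro member_le_sum) auto
  moreover have "real q * a m \<le> real n * (a m / m)"
  proof -
    have "real q * real m \<le> real n" unfolding n_eq by simp
    hence "(real q * real m) * (a m / m) \<le> real n * (a m / m)"
      using nonneg[of m] by (intro mult_right_mono) auto
    thus ?thesis using \<open>m > 0\<close> by simp
  qed
  ultimately have "a n \<le> real n * (a m / m) + (\<Sum>i<m. a i)"
    using subadditive_mult_add[OF sub, of q m r] n_eq by simp
  thus ?thesis using \<open>n > 0\<close> by (simp add: field_simps)
qed

lemma subadditive_convergent:
  fixes a :: "nat \<Rightarrow> real"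
  assumes nonneg: "\<And>n. 0 \<le> a n" and sub: "\<And>m n. a (m + n) \<le> a m + a n"
  shows "convergent (\<lambda>n. a n / n)"
proof -
  define L where "L = (INF n\<in>{1..}. a n / n)"
  have bdd: "bdd_below ((\<lambda>n. a n / n) ` {1..})"
    using nonneg by (intro bdd_belowI[of _ 0]) auto
  have "(\<lambda>n. a n / n) \<longlonglongrightarrow> L"
  proof (rule LIMSEQ_I)
    fix r :: real assume "r > 0"
    then obtain m where m: "m \<ge> 1" "a m / m < L + r / 2"
      using cInf_lessD[of "(\<lambda>n. a n / n) ` {1..}" "L + r / 2"] unfolding L_def by auto
    define C where "C = (\<Sum>i<m. a i)"
    obtain N :: nat where N: "2 * C / r < N" using reals_Archimedean2 by blast
    have "\<bar>a n / n - L\<bar> < r" if n: "n \<ge> Suc N" for n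
    proof -
      have "L \<le> a n / n" unfolding L_def using bdd n by (intro cINF_lower) auto
      moreover have "C / n < r / 2"
      proof -
        have "2 * C < r * N" using N \<open>r > 0\<close> by (simp add: field_simps)
        also have "\<dots> \<le> r * n" using n \<open>r > 0\<close> by (intro mult_left_mono) auto
        finally show ?thesis using n by (simp add: field_simps)
      qed
      moreover have "a n / n \<le> a m / m + C / n"
        using subadditive_quotient_le[OF nonneg sub, of m n] m n unfolding C_def by simp
      ultimately show ?thesis using m(2) by linarith
    qed
    thus "\<exists>N. \<forall>n\<ge>N. norm (a n / n - L) < r" by auto
  qed
  thus ?thesis by (rule convergentI)
qed

section \<open>Counting subsets of an interval\<close>

lemma bij_betw_Pow_lessThan_add:
  fixes m n :: nat
  shows "bij_betw (\<lambda>(S1, S2). S1 \<union> (\<lambda>i. i + m) ` S2) (Pow {..<m} \<times> Pow {..<n}) (Pow {..<m + n})"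
proof (rule bij_betw_byWitness[where f' = "\<lambda>S. (S \<inter> {..<m}, {i. i + m \<in> S})"])
  show "\<forall>S\<in>Pow {..<m + n}. (\<lambda>(S1, S2). S1 \<union> (\<lambda>i. i + m) ` S2) (S \<inter> {..<m}, {i. i + m \<in> S}) = S"
  proof
    fix S assume "S \<in> Pow {..<m + n}"
    have "x \<in> (\<lambda>i. i + m) ` {i. i + m \<in> S}" if "x \<in> S" "\<not> x < m" for x
      using that by (intro image_eqI[of _ _ "x - m"]) auto
    thus "(\<lambda>(S1, S2). S1 \<union> (\<lambda>i. i + m) ` S2) (S \<inter> {..<m}, {i. i + m \<in> S}) = S" by auto
  qed
qed auto

lemma card_subsets_missing_window:
  assumes "k \<le> i" "i < n"
  shows "card {S\<in>Pow {..<n}. i \<notin> (\<lambda>(s, j). s + j) ` (S \<times> {..<k})} \<le> 2 ^ (n - k)"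
proof -
  define W where "W = {i + 1 - k..i}"
  have "{S\<in>Pow {..<n}. i \<notin> (\<lambda>(s, j). s + j) ` (S \<times> {..<k})} \<subseteq> Pow ({..<n} - W)"
  proof safe
    fix S s assume "i \<notin> (\<lambda>(s, j). s + j) ` (S \<times> {..<k})" "s \<in> S" "s \<in> W"
    moreover have "i = s + (i - s)" "i - s < k" using \<open>s \<in> W\<close> assms unfolding W_def by auto
    ultimately show False by (metis (no_types, lifting) SigmaI case_prod_conv image_eqI lessThan_iff)
  qed auto
  hence "card {S\<in>Pow {..<n}. i \<notin> (\<lambda>(s, j). s + j) ` (S \<times> {..<k})} \<le> card (Pow ({..<n} - W))"
    by (intro card_mono) auto
  also have "\<dots> = 2 ^ (n - k)"
    using assms by (simp add: card_Pow W_def card_Diff_subset subset_iff)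
  finally show ?thesis .
qed

lemma sum_card_uncovered_le:
  "(\<Sum>S\<in>Pow {..<n}. real (card ({..<n} - (\<lambda>(s, j). s + j) ` (S \<times> {..<k}))))
     \<le> real k * 2 ^ n + real n * 2 ^ n / 2 ^ k"
proof -
  let ?U = "\<lambda>i. {S\<in>Pow {..<n}. i \<notin> (\<lambda>(s, j). s + j) ` (S \<times> {..<k})}"
  have count_points: "real (card (?U i)) \<le> (if i < k then 2 ^ n else 0) + 2 ^ n / 2 ^ k"
    if "i < n" for i
  proof (cases "i < k")
    case True
    have "card (?U i) \<le> card (Pow {..<n})" by (intro card_mono) auto
    hence "real (card (?U i)) \<le> 2 ^ n" by (simp add: card_Pow)
    thus ?thesis using True by (simp add: add_increasing2)
  next
    case False
    hence "real (card (?U i)) \<le> 2 ^ (n - k)"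
      using card_subsets_missing_window[of k i n] that by (simp add: of_nat_le_iff[symmetric])
    also have "(2::real) ^ (n - k) = 2 ^ n / 2 ^ k" using False that by (simp add: power_diff)
    finally show ?thesis using False by simp
  qed
  have "(\<Sum>S\<in>Pow {..<n}. card ({..<n} - (\<lambda>(s, j). s + j) ` (S \<times> {..<k}))) = (\<Sum>i<n. card (?U i))"
    unfolding set_diff_eq by (rule sum_multicount_gen) auto
  hence "(\<Sum>S\<in>Pow {..<n}. real (card ({..<n} - (\<lambda>(s, j). s + j) ` (S \<times> {..<k}))))
      = (\<Sum>i<n. real (card (?U i)))"
    by (metis (no_types, lifting) of_nat_sum sum.cong)
  also have "\<dots> \<le> (\<Sum>i<n. (if i < k then 2 ^ n else 0) + 2 ^ n / 2 ^ k)"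
    using count_points by (intro sum_mono) simp
  also have "\<dots> = real (card {i\<in>{..<n}. i < k}) * 2 ^ n + real n * 2 ^ n / 2 ^ k"
    by (simp add: sum.distrib sum.inter_filter[symmetric])
  also have "\<dots> \<le> real k * 2 ^ n + real n * 2 ^ n / 2 ^ k"
    using card_mono[of "{..<k}" "{i\<in>{..<n}. i < k}"] by auto
  finally show ?thesis .
qed

section \<open>Entropy of finite partitions\<close>

text \<open>Subadditivity of Shannon entropy: \<open>ln x \<le> x - 1\<close> at \<open>x = P\<^sub>i Q\<^sub>j / p\<^sub>i\<^sub>j\<close>.\<close>
lemma marginal_sum_ln_le_joint:
  fixes p :: "'i \<Rightarrow> 'j \<Rightarrow> real"
  assumes I: "finite I" and J: "finite J"
    and nonneg: "\<And>i j. i \<in> I \<Longrightarrow> j \<in> J \<Longrightarrow> 0 \<le> p i j"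
    and total: "(\<Sum>i\<in>I. \<Sum>j\<in>J. p i j) = 1"
  shows "(\<Sum>i\<in>I. (\<Sum>j\<in>J. p i j) * ln (\<Sum>j\<in>J. p i j))
           + (\<Sum>j\<in>J. (\<Sum>i\<in>I. p i j) * ln (\<Sum>i\<in>I. p i j))
         \<le> (\<Sum>i\<in>I. \<Sum>j\<in>J. p i j * ln (p i j))"
proof -
  define P where "P i = (\<Sum>j\<in>J. p i j)" for i
  define Q where "Q j = (\<Sum>i\<in>I. p i j)" for j
  have pointwise: "p i j * (ln (P i) + ln (Q j) - ln (p i j)) \<le> P i * Q j - p i j"
    if i: "i \<in> I" and j: "j \<in> J" for i j
  proof (cases "p i j = 0")
    case True
    thus ?thesis using nonneg i j I J by (simp add: P_def Q_def sum_nonneg)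
  next
    case False
    hence pos: "0 < p i j" using nonneg[OF i j] by simp
    have "p i j \<le> P i" "p i j \<le> Q j"
      unfolding P_def Q_def using nonneg i j I J by (auto intro: member_le_sum)
    hence "0 < P i" "0 < Q j" using pos by auto
    hence "ln (P i) + ln (Q j) - ln (p i j) = ln (P i * Q j / p i j)"
      using pos by (simp add: ln_mult ln_div)
    also have "\<dots> \<le> P i * Q j / p i j - 1"
      using pos \<open>0 < P i\<close> \<open>0 < Q j\<close> by (intro ln_le_minus_one) simp
    finally have "p i j * (ln (P i) + ln (Q j) - ln (p i j)) \<le> p i j * (P i * Q j / p i j - 1)"
      using pos by (simp add: mult_left_mono)
    also have "\<dots> = P i * Q j - p i j" using pos by (simp add: field_simps)
    finally show ?thesis .
  qed
  have "(\<Sum>i\<in>I. P i * ln (P i)) + (\<Sum>j\<in>J. Q j * ln (Q j)) - (\<Sum>i\<in>I. \<Sum>j\<in>J. p i j * ln (p i j))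
      = (\<Sum>i\<in>I. \<Sum>j\<in>J. p i j * (ln (P i) + ln (Q j) - ln (p i j)))"
    unfolding P_def Q_def
    by (simp add: algebra_simps sum.distrib sum_subtractf sum_distrib_right sum.swap[of _ J I])
  also have "\<dots> \<le> (\<Sum>i\<in>I. \<Sum>j\<in>J. P i * Q j - p i j)"
    using pointwise by (intro sum_mono) auto
  also have "\<dots> = (\<Sum>i\<in>I. P i) * (\<Sum>j\<in>J. Q j) - 1"
    using total by (simp add: sum_subtractf sum_product)
  also have "\<dots> = 0"
    using total unfolding P_def Q_def by (subst (asm) sum.swap) (simp add: sum.swap[of _ J I])
  finally show ?thesis unfolding P_def Q_def by simp
qed

definition refines :: "'a set set \<Rightarrow> 'a set set \<Rightarrow> bool" where
  "refines \<gamma> \<beta> \<longleftrightarrow> (\<forall>C\<in>\<gamma>. \<forall>B\<in>\<beta>. B \<inter> C \<noteq> {} \<longrightarrow> C \<subseteq> B)"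

definition pjoin :: "'a set set \<Rightarrow> 'a set set \<Rightarrow> 'a set set" where
  "pjoin \<beta> \<gamma> = (\<lambda>(B, C). B \<inter> C) ` (\<beta> \<times> \<gamma>)"

lemma fin_meas_partition_sets: "fin_meas_partition M \<alpha> \<Longrightarrow> A \<in> \<alpha> \<Longrightarrow> A \<in> sets M"
  unfolding fin_meas_partition_def by (simp add: subset_iff)

lemma fin_meas_partition_disjoint:
  "fin_meas_partition M \<alpha> \<Longrightarrow> A \<in> \<alpha> \<Longrightarrow> B \<in> \<alpha> \<Longrightarrow> A \<noteq> B \<Longrightarrow> A \<inter> B = {}"
  unfolding fin_meas_partition_def by simp

lemma pjoin_cells_disjoint:
  assumes "fin_meas_partition M \<beta>" "fin_meas_partition M \<gamma>"
    and "B \<in> \<beta>" "C \<in> \<gamma>" "B' \<in> \<beta>" "C' \<in> \<gamma>" "(B, C) \<noteq> (B', C')"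
  shows "(B \<inter> C) \<inter> (B' \<inter> C') = {}"
proof (cases "B = B'")
  case True
  hence "C \<inter> C' = {}" using assms fin_meas_partition_disjoint[of M \<gamma> C C'] by simp
  thus ?thesis by blast
next
  case False
  hence "B \<inter> B' = {}" using assms fin_meas_partition_disjoint[of M \<beta> B B'] by simp
  thus ?thesis by blast
qed

lemma fin_meas_partition_pjoin:
  assumes \<beta>: "fin_meas_partition M \<beta>" and \<gamma>: "fin_meas_partition M \<gamma>"
  shows "fin_meas_partition M (pjoin \<beta> \<gamma>)"
  unfolding fin_meas_partition_def
proof (intro conjI ballI impI)
  show "finite (pjoin \<beta> \<gamma>)" "pjoin \<beta> \<gamma> \<subseteq> sets M"
    using \<beta> \<gamma> unfolding fin_meas_partition_def pjoin_def by auto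
  show "\<Union> (pjoin \<beta> \<gamma>) = space M"
  proof
    show "\<Union> (pjoin \<beta> \<gamma>) \<subseteq> space M" using \<beta> unfolding fin_meas_partition_def pjoin_def by auto
    show "space M \<subseteq> \<Union> (pjoin \<beta> \<gamma>)"
    proof
      fix x assume "x \<in> space M"
      hence "x \<in> \<Union>\<beta>" "x \<in> \<Union>\<gamma>" using \<beta> \<gamma> unfolding fin_meas_partition_def by simp_all
      then obtain B C where "B \<in> \<beta>" "C \<in> \<gamma>" "x \<in> B \<inter> C" by blast
      thus "x \<in> \<Union> (pjoin \<beta> \<gamma>)" unfolding pjoin_def by blast
    qed
  qed
  fix A A' assume "A \<in> pjoin \<beta> \<gamma>" "A' \<in> pjoin \<beta> \<gamma>" "A \<noteq> A'"
  then obtain B C B' C' where "B \<in> \<beta>" "C \<in> \<gamma>" "B' \<in> \<beta>" "C' \<in> \<gamma>" "(B, C) \<noteq> (B', C')"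
    and "A = B \<inter> C" "A' = B' \<inter> C'"
    unfolding pjoin_def by auto
  thus "A \<inter> A' = {}" using pjoin_cells_disjoint[OF \<beta> \<gamma>] by simp
qed

context prob_space
begin

lemma measure_eq_sum_partition:
  assumes \<gamma>: "fin_meas_partition M \<gamma>" and A: "A \<in> sets M"
  shows "measure M A = (\<Sum>C\<in>\<gamma>. measure M (A \<inter> C))"
proof -
  have "A = A \<inter> \<Union>\<gamma>"
    using \<gamma> sets.sets_into_space[OF A] unfolding fin_meas_partition_def by auto
  also have "\<dots> = (\<Union>C\<in>\<gamma>. A \<inter> C)" by (rule Int_Union)
  also have "measure M \<dots> = (\<Sum>C\<in>\<gamma>. measure M (A \<inter> C))"
  proof (rule finite_measure_finite_Union)
    show "disjoint_family_on (\<lambda>C. A \<inter> C) \<gamma>"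
      using \<gamma> unfolding fin_meas_partition_def disjoint_family_on_def by blast
  qed (use \<gamma> A in \<open>auto simp: fin_meas_partition_def\<close>)
  finally show ?thesis .
qed

lemma part_entropy_nonneg: "0 \<le> part_entropy M \<beta>"
proof -
  have "measure M A * ln (measure M A) \<le> 0" for A
  proof (cases "measure M A = 0")
    case False
    hence "0 < measure M A" using measure_nonneg[of M A] by linarith
    hence "ln (measure M A) \<le> 0" using prob_le_1[of A] by simp
    thus ?thesis by (simp add: mult_nonneg_nonpos)
  qed simp
  thus ?thesis unfolding part_entropy_def by (simp add: sum_nonpos)
qed

lemma part_entropy_mono:
  assumes \<beta>: "fin_meas_partition M \<beta>" and \<gamma>: "fin_meas_partition M \<gamma>"
    and "refines \<gamma> \<beta>"
  shows "part_entropy M \<beta> \<le> part_entropy M \<gamma>"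
proof -
  have sets: "\<beta> \<subseteq> sets M" "\<gamma> \<subseteq> sets M" using \<beta> \<gamma> unfolding fin_meas_partition_def by auto
  have "(\<Sum>C\<in>\<gamma>. measure M C * ln (measure M C))
      = (\<Sum>C\<in>\<gamma>. \<Sum>B\<in>\<beta>. measure M (C \<inter> B) * ln (measure M C))"
  proof (rule sum.cong[OF refl])
    fix C assume "C \<in> \<gamma>"
    hence "measure M C = (\<Sum>B\<in>\<beta>. measure M (C \<inter> B))"
      using sets by (intro measure_eq_sum_partition[OF \<beta>]) auto
    thus "measure M C * ln (measure M C) = (\<Sum>B\<in>\<beta>. measure M (C \<inter> B) * ln (measure M C))"
      by (simp add: sum_distrib_right[symmetric])
  qed
  also have "\<dots> \<le> (\<Sum>C\<in>\<gamma>. \<Sum>B\<in>\<beta>. measure M (C \<inter> B) * ln (measure M B))"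
  proof (intro sum_mono)
    fix C B assume C: "C \<in> \<gamma>" and B: "B \<in> \<beta>"
    show "measure M (C \<inter> B) * ln (measure M C) \<le> measure M (C \<inter> B) * ln (measure M B)"
    proof (cases "measure M (C \<inter> B) = 0")
      case False
      hence "B \<inter> C \<noteq> {}" by (metis Int_commute measure_empty)
      hence "C \<subseteq> B" using \<open>refines \<gamma> \<beta>\<close> C B unfolding refines_def by blast
      hence "C \<inter> B = C" by blast
      have "measure M C \<le> measure M B"
        using \<open>C \<subseteq> B\<close> B sets by (intro finite_measure_mono) auto
      moreover have "0 < measure M C"
        using False \<open>C \<inter> B = C\<close> measure_nonneg[of M C] by (simp add: order_less_le)
      ultimately have "ln (measure M C) \<le> ln (measure M B)" by simp
      thus ?thesis by (simp add: mult_left_mono)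
    qed simp
  qed
  also have "\<dots> = (\<Sum>B\<in>\<beta>. measure M B * ln (measure M B))"
  proof (subst sum.swap, rule sum.cong[OF refl])
    fix B assume "B \<in> \<beta>"
    hence "measure M B = (\<Sum>C\<in>\<gamma>. measure M (B \<inter> C))"
      using sets by (intro measure_eq_sum_partition[OF \<gamma>]) auto
    thus "(\<Sum>C\<in>\<gamma>. measure M (C \<inter> B) * ln (measure M B)) = measure M B * ln (measure M B)"
      by (simp add: sum_distrib_right[symmetric] Int_commute)
  qed
  finally show ?thesis unfolding part_entropy_def by simp
qed

lemma part_entropy_pjoin_le:
  assumes \<beta>: "fin_meas_partition M \<beta>" and \<gamma>: "fin_meas_partition M \<gamma>"
  shows "part_entropy M (pjoin \<beta> \<gamma>) \<le> part_entropy M \<beta> + part_entropy M \<gamma>"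
proof -
  have fin: "finite \<beta>" "finite \<gamma>" and sets: "\<beta> \<subseteq> sets M" "\<gamma> \<subseteq> sets M"
    using \<beta> \<gamma> unfolding fin_meas_partition_def by auto
  define h where "h A = measure M A * ln (measure M A)" for A
  have marginal_\<beta>: "(\<Sum>C\<in>\<gamma>. measure M (B \<inter> C)) = measure M B" if "B \<in> \<beta>" for B
    using measure_eq_sum_partition[OF \<gamma>, of B] sets that by auto
  have marginal_\<gamma>: "(\<Sum>B\<in>\<beta>. measure M (B \<inter> C)) = measure M C" if "C \<in> \<gamma>" for C
    using measure_eq_sum_partition[OF \<beta>, of C] sets that by (auto simp: Int_commute)
  have "measure M (space M) = (\<Sum>B\<in>\<beta>. measure M (space M \<inter> B))"
    by (rule measure_eq_sum_partition[OF \<beta> sets.top])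
  also have "\<dots> = (\<Sum>B\<in>\<beta>. \<Sum>C\<in>\<gamma>. measure M (B \<inter> C))"
    using sets sets.sets_into_space marginal_\<beta> by (intro sum.cong) (auto simp: Int_absorb1)
  finally have total: "(\<Sum>B\<in>\<beta>. \<Sum>C\<in>\<gamma>. measure M (B \<inter> C)) = 1" by (simp add: prob_space)
  have "(\<Sum>B\<in>\<beta>. h B) = (\<Sum>B\<in>\<beta>. (\<Sum>C\<in>\<gamma>. measure M (B \<inter> C)) * ln (\<Sum>C\<in>\<gamma>. measure M (B \<inter> C)))"
    using marginal_\<beta> by (simp add: h_def)
  moreover have "(\<Sum>C\<in>\<gamma>. h C) = (\<Sum>C\<in>\<gamma>. (\<Sum>B\<in>\<beta>. measure M (B \<inter> C)) * ln (\<Sum>B\<in>\<beta>. measure M (B \<inter> C)))"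
    using marginal_\<gamma> by (simp add: h_def)
  moreover have "(\<Sum>B\<in>\<beta>. (\<Sum>C\<in>\<gamma>. measure M (B \<inter> C)) * ln (\<Sum>C\<in>\<gamma>. measure M (B \<inter> C)))
      + (\<Sum>C\<in>\<gamma>. (\<Sum>B\<in>\<beta>. measure M (B \<inter> C)) * ln (\<Sum>B\<in>\<beta>. measure M (B \<inter> C)))
      \<le> (\<Sum>B\<in>\<beta>. \<Sum>C\<in>\<gamma>. h (B \<inter> C))"
    unfolding h_def by (rule marginal_sum_ln_le_joint[OF fin _ total]) simp
  ultimately have "(\<Sum>B\<in>\<beta>. h B) + (\<Sum>C\<in>\<gamma>. h C) \<le> (\<Sum>B\<in>\<beta>. \<Sum>C\<in>\<gamma>. h (B \<inter> C))"
    by linarith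
  also have "\<dots> = (\<Sum>A\<in>pjoin \<beta> \<gamma>. h A)"
    \<comment> \<open>two pairs give the same cell \<open>B \<inter> C\<close> only if it is empty, and then \<open>h {} = 0\<close>\<close>
  proof -
    have "(\<Sum>A\<in>pjoin \<beta> \<gamma>. h A) = (\<Sum>(B, C)\<in>\<beta> \<times> \<gamma>. h (B \<inter> C))"
      unfolding pjoin_def
    proof (subst sum.reindex_nontrivial)
      fix x y assume "x \<in> \<beta> \<times> \<gamma>" "y \<in> \<beta> \<times> \<gamma>" "x \<noteq> y"
        and "(case x of (B, C) \<Rightarrow> B \<inter> C) = (case y of (B, C) \<Rightarrow> B \<inter> C)"
      moreover obtain B C B' C' where "x = (B, C)" "y = (B', C')" by (cases x, cases y)
      ultimately have "B \<inter> C = {}"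
        using pjoin_cells_disjoint[OF \<beta> \<gamma>, of B C B' C'] by auto
      thus "h (case x of (B, C) \<Rightarrow> B \<inter> C) = 0" using \<open>x = (B, C)\<close> by (simp add: h_def)
    qed (use fin in \<open>simp_all add: comp_def split_beta\<close>)
    thus ?thesis by (simp add: sum.cartesian_product split_beta)
  qed
  finally show ?thesis unfolding part_entropy_def h_def by simp
qed

end

section \<open>Joins along an orbit\<close>

lemma part_join_eq_image_PiE:
  "part_join M T \<alpha> S = (\<lambda>f. space M \<inter> (\<Inter>i\<in>S. (T ^^ i) -` f i)) ` (S \<rightarrow>\<^sub>E \<alpha>)"
proof
  show "part_join M T \<alpha> S \<subseteq> (\<lambda>f. space M \<inter> (\<Inter>i\<in>S. (T ^^ i) -` f i)) ` (S \<rightarrow>\<^sub>E \<alpha>)"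
  proof
    fix A assume "A \<in> part_join M T \<alpha> S"
    then obtain f where "\<forall>i\<in>S. f i \<in> \<alpha>" "A = space M \<inter> (\<Inter>i\<in>S. (T ^^ i) -` f i)"
      unfolding part_join_def by blast
    moreover have "(\<Inter>i\<in>S. (T ^^ i) -` restrict f S i) = (\<Inter>i\<in>S. (T ^^ i) -` f i)" by simp
    ultimately show "A \<in> (\<lambda>f. space M \<inter> (\<Inter>i\<in>S. (T ^^ i) -` f i)) ` (S \<rightarrow>\<^sub>E \<alpha>)"
      by (intro image_eqI[of _ _ "restrict f S"]) auto
  qed
qed (auto simp: part_join_def)

lemma part_join_subset_space: "A \<in> part_join M T \<alpha> S \<Longrightarrow> A \<subseteq> space M"
  unfolding part_join_def by blast

lemma part_join_same_block:
  "A \<in> part_join M T \<alpha> S \<Longrightarrow> x \<in> A \<Longrightarrow> y \<in> A \<Longrightarrow> i \<in> S \<Longrightarrow> \<exists>B\<in>\<alpha>. (T ^^ i) x \<in> B \<and> (T ^^ i) y \<in> B"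
  unfolding part_join_def by blast

lemma refines_part_join:
  assumes \<alpha>: "fin_meas_partition M \<alpha>"
    and \<gamma>_space: "\<And>C. C \<in> \<gamma> \<Longrightarrow> C \<subseteq> space M"
    and \<gamma>_blocks: "\<And>C x y i. C \<in> \<gamma> \<Longrightarrow> x \<in> C \<Longrightarrow> y \<in> C \<Longrightarrow> i \<in> S \<Longrightarrow>
                     \<exists>B\<in>\<alpha>. (T ^^ i) x \<in> B \<and> (T ^^ i) y \<in> B"
  shows "refines \<gamma> (part_join M T \<alpha> S)"
  unfolding refines_def
proof (intro ballI impI subsetI)
  fix C A y assume C: "C \<in> \<gamma>" and A: "A \<in> part_join M T \<alpha> S" and "A \<inter> C \<noteq> {}" and y: "y \<in> C"
  then obtain x where x: "x \<in> A" "x \<in> C" by blast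
  obtain f where f: "\<forall>i\<in>S. f i \<in> \<alpha>" and A_eq: "A = space M \<inter> (\<Inter>i\<in>S. (T ^^ i) -` f i)"
    using A unfolding part_join_def by blast
  have "(T ^^ i) y \<in> f i" if i: "i \<in> S" for i
  proof -
    obtain B where B: "B \<in> \<alpha>" "(T ^^ i) x \<in> B" "(T ^^ i) y \<in> B"
      using \<gamma>_blocks[OF C x(2) y i] by blast
    have "(T ^^ i) x \<in> f i" using x(1) i A_eq by auto
    hence "B \<inter> f i \<noteq> {}" using B(2) by blast
    hence "B = f i" using fin_meas_partition_disjoint[OF \<alpha> \<open>B \<in> \<alpha>\<close>, of "f i"] f i by blast
    thus ?thesis using B by simp
  qed
  thus "y \<in> A" using y \<gamma>_space[OF C] A_eq by auto
qed

lemma part_join_empty: "part_join M T \<alpha> {} = {space M}"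
  unfolding part_join_def by simp

lemma part_join_zero:
  assumes "fin_meas_partition M \<alpha>"
  shows "part_join M T \<alpha> {0} = \<alpha>"
proof -
  have "B \<subseteq> space M" if "B \<in> \<alpha>" for B
    using assms that unfolding fin_meas_partition_def by auto
  hence "part_join M T \<alpha> {0} = (\<lambda>B. space M \<inter> B) ` \<alpha>" unfolding part_join_def by auto
  also have "\<dots> = \<alpha>" using \<open>\<And>B. B \<in> \<alpha> \<Longrightarrow> B \<subseteq> space M\<close> by (auto simp: Int_absorb1 image_iff)
  finally show ?thesis .
qed

locale mps_system =
  fixes M :: "'a measure" and T :: "'a \<Rightarrow> 'a"
  assumes mps: "mps M T"
begin

sublocale prob_space M
  using mps unfolding mps_def by simp

lemma measurable_funpow: "T ^^ n \<in> M \<rightarrow>\<^sub>M M"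
  using mps unfolding mps_def by (intro measurable_compose_n) simp

lemma funpow_in_space: "x \<in> space M \<Longrightarrow> (T ^^ n) x \<in> space M"
  using measurable_space[OF measurable_funpow] .

lemma measure_funpow_vimage:
  "A \<in> sets M \<Longrightarrow> measure M ((T ^^ n) -` A \<inter> space M) = measure M A"
proof (induction n arbitrary: A)
  case 0 thus ?case using sets.sets_into_space by (simp add: Int_absorb2)
next
  case (Suc n)
  have T: "T \<in> M \<rightarrow>\<^sub>M M" and "distr M M T = M" using mps unfolding mps_def by simp_all
  have "(T ^^ Suc n) -` A \<inter> space M = T -` ((T ^^ n) -` A \<inter> space M) \<inter> space M"
    using funpow_in_space[of _ 1] by (auto simp: funpow_swap1)
  hence "measure M ((T ^^ Suc n) -` A \<inter> space M) = measure (distr M M T) ((T ^^ n) -` A \<inter> space M)"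
    using T measurable_sets[OF measurable_funpow Suc.prems] by (simp add: measure_distr)
  also have "\<dots> = measure M A" using Suc \<open>distr M M T = M\<close> by simp
  finally show ?case .
qed

lemma fin_meas_partition_part_join:
  assumes \<alpha>: "fin_meas_partition M \<alpha>" and S: "finite S"
  shows "fin_meas_partition M (part_join M T \<alpha> S)"
  unfolding fin_meas_partition_def
proof (intro conjI ballI impI)
  have fin: "finite \<alpha>" and sets: "\<alpha> \<subseteq> sets M" and cover: "\<Union>\<alpha> = space M"
    using \<alpha> unfolding fin_meas_partition_def by auto
  show "finite (part_join M T \<alpha> S)"
    unfolding part_join_eq_image_PiE using S fin by (intro finite_imageI finite_PiE)
  show "part_join M T \<alpha> S \<subseteq> sets M"
  proof
    fix A assume "A \<in> part_join M T \<alpha> S"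
    then obtain f where f: "\<forall>i\<in>S. f i \<in> \<alpha>" and A_eq: "A = space M \<inter> (\<Inter>i\<in>S. (T ^^ i) -` f i)"
      unfolding part_join_def by blast
    have "{x\<in>space M. (T ^^ i) x \<in> f i} \<in> sets M" if "i \<in> S" for i
    proof -
      have "{x\<in>space M. (T ^^ i) x \<in> f i} = (T ^^ i) -` f i \<inter> space M" by auto
      thus ?thesis using f sets that measurable_sets[OF measurable_funpow] by auto
    qed
    hence "{x\<in>space M. \<forall>i\<in>S. (T ^^ i) x \<in> f i} \<in> sets M"
      using S by (intro sets.sets_Collect_finite_All)
    moreover have "A = {x\<in>space M. \<forall>i\<in>S. (T ^^ i) x \<in> f i}" unfolding A_eq by auto
    ultimately show "A \<in> sets M" by simp
  qed
  show "\<Union> (part_join M T \<alpha> S) = space M"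
  proof
    show "space M \<subseteq> \<Union> (part_join M T \<alpha> S)"
    proof
      fix x assume x: "x \<in> space M"
      have "\<exists>B\<in>\<alpha>. (T ^^ i) x \<in> B" for i using funpow_in_space[OF x] cover by blast
      then obtain f where f: "\<And>i. f i \<in> \<alpha> \<and> (T ^^ i) x \<in> f i" by metis
      hence "space M \<inter> (\<Inter>i\<in>S. (T ^^ i) -` f i) \<in> part_join M T \<alpha> S"
        unfolding part_join_def by blast
      thus "x \<in> \<Union> (part_join M T \<alpha> S)" using x f by blast
    qed
  qed (auto dest: part_join_subset_space)
  fix A A' assume A: "A \<in> part_join M T \<alpha> S" and A': "A' \<in> part_join M T \<alpha> S" and "A \<noteq> A'"
  obtain f where f: "\<forall>i\<in>S. f i \<in> \<alpha>" and A_eq: "A = space M \<inter> (\<Inter>i\<in>S. (T ^^ i) -` f i)"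
    using A unfolding part_join_def by blast
  obtain g where g: "\<forall>i\<in>S. g i \<in> \<alpha>" and A'_eq: "A' = space M \<inter> (\<Inter>i\<in>S. (T ^^ i) -` g i)"
    using A' unfolding part_join_def by blast
  obtain i where "i \<in> S" "f i \<noteq> g i"
    using \<open>A \<noteq> A'\<close> unfolding A_eq A'_eq by (metis (mono_tags, lifting) INF_cong)
  hence "f i \<inter> g i = {}" using fin_meas_partition_disjoint[OF \<alpha>] f g by blast
  thus "A \<inter> A' = {}" using \<open>i \<in> S\<close> unfolding A_eq A'_eq by blast
qed

lemma part_join_shift:
  "part_join M T \<alpha> ((\<lambda>i. i + m) ` S) = (\<lambda>A. (T ^^ m) -` A \<inter> space M) ` part_join M T \<alpha> S"
proof
  show "part_join M T \<alpha> ((\<lambda>i. i + m) ` S) \<subseteq> (\<lambda>A. (T ^^ m) -` A \<inter> space M) ` part_join M T \<alpha> S"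
  proof
    fix A assume "A \<in> part_join M T \<alpha> ((\<lambda>i. i + m) ` S)"
    then obtain f where f: "\<forall>j\<in>(\<lambda>i. i + m) ` S. f j \<in> \<alpha>"
      and A_eq: "A = space M \<inter> (\<Inter>j\<in>(\<lambda>i. i + m) ` S. (T ^^ j) -` f j)"
      unfolding part_join_def by blast
    have "space M \<inter> (\<Inter>i\<in>S. (T ^^ i) -` f (i + m)) \<in> part_join M T \<alpha> S"
      using f unfolding part_join_def by auto
    moreover have "A = (T ^^ m) -` (space M \<inter> (\<Inter>i\<in>S. (T ^^ i) -` f (i + m))) \<inter> space M"
      unfolding A_eq using funpow_in_space by (auto simp: funpow_add)
    ultimately show "A \<in> (\<lambda>A. (T ^^ m) -` A \<inter> space M) ` part_join M T \<alpha> S" by blast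
  qed
  show "(\<lambda>A. (T ^^ m) -` A \<inter> space M) ` part_join M T \<alpha> S \<subseteq> part_join M T \<alpha> ((\<lambda>i. i + m) ` S)"
  proof
    fix A assume "A \<in> (\<lambda>A. (T ^^ m) -` A \<inter> space M) ` part_join M T \<alpha> S"
    then obtain g where g: "\<forall>i\<in>S. g i \<in> \<alpha>"
      and A_eq: "A = (T ^^ m) -` (space M \<inter> (\<Inter>i\<in>S. (T ^^ i) -` g i)) \<inter> space M"
      unfolding part_join_def by blast
    have "space M \<inter> (\<Inter>j\<in>(\<lambda>i. i + m) ` S. (T ^^ j) -` g (j - m)) \<in> part_join M T \<alpha> ((\<lambda>i. i + m) ` S)"
      using g unfolding part_join_def by (auto intro!: exI[of _ "\<lambda>j. g (j - m)"])
    moreover have "A = space M \<inter> (\<Inter>j\<in>(\<lambda>i. i + m) ` S. (T ^^ j) -` g (j - m))"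
      unfolding A_eq using funpow_in_space by (auto simp: funpow_add)
    ultimately show "A \<in> part_join M T \<alpha> ((\<lambda>i. i + m) ` S)" by simp
  qed
qed

lemma part_entropy_part_join_mono:
  assumes \<alpha>: "fin_meas_partition M \<alpha>" and "finite S'" "S \<subseteq> S'"
  shows "part_entropy M (part_join M T \<alpha> S) \<le> part_entropy M (part_join M T \<alpha> S')"
proof (rule part_entropy_mono)
  show "fin_meas_partition M (part_join M T \<alpha> S)"
    by (rule fin_meas_partition_part_join[OF \<alpha> finite_subset[OF \<open>S \<subseteq> S'\<close> \<open>finite S'\<close>]])
  show "fin_meas_partition M (part_join M T \<alpha> S')"
    by (rule fin_meas_partition_part_join[OF \<alpha> \<open>finite S'\<close>])
  show "refines (part_join M T \<alpha> S') (part_join M T \<alpha> S)"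
  proof (rule refines_part_join[OF \<alpha> part_join_subset_space])
    fix C x y i assume "C \<in> part_join M T \<alpha> S'" "x \<in> C" "y \<in> C" "i \<in> S"
    thus "\<exists>B\<in>\<alpha>. (T ^^ i) x \<in> B \<and> (T ^^ i) y \<in> B"
      using \<open>S \<subseteq> S'\<close> by (intro part_join_same_block[where S = S']) auto
  qed
qed

lemma part_entropy_part_join_Un:
  assumes \<alpha>: "fin_meas_partition M \<alpha>" and "finite S" "finite S'"
  shows "part_entropy M (part_join M T \<alpha> (S \<union> S'))
           \<le> part_entropy M (part_join M T \<alpha> S) + part_entropy M (part_join M T \<alpha> S')"
proof -
  let ?\<gamma> = "pjoin (part_join M T \<alpha> S) (part_join M T \<alpha> S')"
  have parts: "fin_meas_partition M (part_join M T \<alpha> S)" "fin_meas_partition M (part_join M T \<alpha> S')"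
    using fin_meas_partition_part_join[OF \<alpha>] assms(2,3) by blast+
  have "refines ?\<gamma> (part_join M T \<alpha> (S \<union> S'))"
  proof (rule refines_part_join[OF \<alpha>])
    fix C assume "C \<in> ?\<gamma>"
    then obtain B B' where "B \<in> part_join M T \<alpha> S" "B' \<in> part_join M T \<alpha> S'" "C = B \<inter> B'"
      unfolding pjoin_def by auto
    thus "C \<subseteq> space M" by (auto dest: part_join_subset_space)
    fix x y i assume "x \<in> C" "y \<in> C" "i \<in> S \<union> S'"
    thus "\<exists>B\<in>\<alpha>. (T ^^ i) x \<in> B \<and> (T ^^ i) y \<in> B"
      using part_join_same_block[OF \<open>B \<in> _\<close>, of x y i] part_join_same_block[OF \<open>B' \<in> _\<close>, of x y i]
        \<open>C = B \<inter> B'\<close> by blast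
  qed
  hence "part_entropy M (part_join M T \<alpha> (S \<union> S')) \<le> part_entropy M ?\<gamma>"
    using assms parts
    by (intro part_entropy_mono fin_meas_partition_part_join fin_meas_partition_pjoin) simp_all
  also have "\<dots> \<le> part_entropy M (part_join M T \<alpha> S) + part_entropy M (part_join M T \<alpha> S')"
    by (rule part_entropy_pjoin_le[OF parts])
  finally show ?thesis .
qed

lemma part_entropy_part_join_shift:
  assumes \<alpha>: "fin_meas_partition M \<alpha>" and S: "finite S"
  shows "part_entropy M (part_join M T \<alpha> ((\<lambda>i. i + m) ` S)) = part_entropy M (part_join M T \<alpha> S)"
proof -
  let ?pre = "\<lambda>A. (T ^^ m) -` A \<inter> space M"
  have "bij_betw (T ^^ m) (space M) (space M)"
    using mps unfolding mps_def by (intro bij_betw_funpow) simp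
  hence onto: "(T ^^ m) ` space M = space M" by (simp add: bij_betw_def)
  have "(T ^^ m) ` ?pre A = A" if "A \<subseteq> space M" for A
  proof
    show "A \<subseteq> (T ^^ m) ` ?pre A"
    proof
      fix a assume "a \<in> A"
      hence "a \<in> (T ^^ m) ` space M" using that onto by auto
      then obtain z where "z \<in> space M" "a = (T ^^ m) z" by (rule imageE)
      thus "a \<in> (T ^^ m) ` ?pre A" using \<open>a \<in> A\<close> by blast
    qed
  qed auto
  hence inj: "inj_on ?pre (part_join M T \<alpha> S)"
    by (intro inj_on_inverseI[where g = "image (T ^^ m)"]) (simp add: part_join_subset_space)
  have "measure M (?pre A) = measure M A" if "A \<in> part_join M T \<alpha> S" for A
    using fin_meas_partition_sets[OF fin_meas_partition_part_join[OF \<alpha> S] that]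
    by (rule measure_funpow_vimage)
  thus ?thesis unfolding part_join_shift part_entropy_def by (simp add: sum.reindex[OF inj])
qed

lemma part_entropy_part_join_singleton:
  "fin_meas_partition M \<alpha> \<Longrightarrow> part_entropy M (part_join M T \<alpha> {i}) = part_entropy M \<alpha>"
  using part_entropy_part_join_shift[of \<alpha> "{0}" i] by (simp add: part_join_zero)

lemma part_entropy_part_join_le_card:
  assumes \<alpha>: "fin_meas_partition M \<alpha>" and "finite S"
  shows "part_entropy M (part_join M T \<alpha> S) \<le> card S * part_entropy M \<alpha>"
  using \<open>finite S\<close>
proof (induction S rule: finite_induct)
  case empty
  thus ?case by (simp add: part_join_empty part_entropy_def prob_space)
next
  case (insert i S)
  have "part_entropy M (part_join M T \<alpha> ({i} \<union> S))
      \<le> part_entropy M (part_join M T \<alpha> {i}) + part_entropy M (part_join M T \<alpha> S)"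
    using insert by (intro part_entropy_part_join_Un[OF \<alpha>]) auto
  thus ?case using insert part_entropy_part_join_singleton[OF \<alpha>, of i] by (simp add: algebra_simps)
qed

lemma part_entropy_part_join_sumset_le:
  assumes \<alpha>: "fin_meas_partition M \<alpha>" and S: "finite S"
  shows "part_entropy M (part_join M T \<alpha> ((\<lambda>(s, j). s + j) ` (S \<times> {..<k})))
           \<le> part_entropy M (part_join M T (part_join M T \<alpha> {..<k}) S)"
proof (rule part_entropy_mono)
  let ?\<beta> = "part_join M T \<alpha> {..<k}"
  have \<beta>: "fin_meas_partition M ?\<beta>" by (rule fin_meas_partition_part_join[OF \<alpha>]) simp
  show "fin_meas_partition M (part_join M T \<alpha> ((\<lambda>(s, j). s + j) ` (S \<times> {..<k})))"
    using S by (intro fin_meas_partition_part_join[OF \<alpha>]) simp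
  show "fin_meas_partition M (part_join M T ?\<beta> S)"
    by (rule fin_meas_partition_part_join[OF \<beta> S])
  show "refines (part_join M T ?\<beta> S) (part_join M T \<alpha> ((\<lambda>(s, j). s + j) ` (S \<times> {..<k})))"
  proof (rule refines_part_join[OF \<alpha> part_join_subset_space])
    fix C x y t assume C: "C \<in> part_join M T ?\<beta> S" and "x \<in> C" "y \<in> C"
      and "t \<in> (\<lambda>(s, j). s + j) ` (S \<times> {..<k})"
    then obtain s j where "s \<in> S" "j < k" "t = j + s" by auto
    obtain D where D: "D \<in> ?\<beta>" "(T ^^ s) x \<in> D" "(T ^^ s) y \<in> D"
      using part_join_same_block[OF C \<open>x \<in> C\<close> \<open>y \<in> C\<close> \<open>s \<in> S\<close>] by blast
    obtain B where "B \<in> \<alpha>" "(T ^^ j) ((T ^^ s) x) \<in> B" "(T ^^ j) ((T ^^ s) y) \<in> B"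
      using part_join_same_block[OF D, of j] \<open>j < k\<close> by blast
    thus "\<exists>B\<in>\<alpha>. (T ^^ t) x \<in> B \<and> (T ^^ t) y \<in> B" unfolding \<open>t = j + s\<close> funpow_add by auto
  qed
qed

end

definition block_entropy :: "'a measure \<Rightarrow> ('a \<Rightarrow> 'a) \<Rightarrow> 'a set set \<Rightarrow> nat \<Rightarrow> real" where
  "block_entropy M T \<alpha> n = part_entropy M (part_join M T \<alpha> {..<n})"

definition sample_entropy_sum :: "'a measure \<Rightarrow> ('a \<Rightarrow> 'a) \<Rightarrow> 'a set set \<Rightarrow> nat \<Rightarrow> real" where
  "sample_entropy_sum M T \<alpha> n = (\<Sum>S\<in>Pow {..<n}. (1 / 2 ^ n) * part_entropy M (part_join M T \<alpha> S))"

context mps_system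
begin

lemma block_entropy_subadditive:
  assumes \<alpha>: "fin_meas_partition M \<alpha>"
  shows "block_entropy M T \<alpha> (m + n) \<le> block_entropy M T \<alpha> m + block_entropy M T \<alpha> n"
proof -
  have "(\<lambda>i. i + m) ` {..<n} = {m..<m + n}" by (simp add: lessThan_atLeast0 add.commute)
  hence "{..<m + n} = {..<m} \<union> (\<lambda>i. i + m) ` {..<n}" by auto
  hence "block_entropy M T \<alpha> (m + n) \<le> block_entropy M T \<alpha> m
      + part_entropy M (part_join M T \<alpha> ((\<lambda>i. i + m) ` {..<n}))"
    unfolding block_entropy_def using part_entropy_part_join_Un[OF \<alpha>] by simp
  thus ?thesis unfolding block_entropy_def part_entropy_part_join_shift[OF \<alpha> finite_lessThan] .
qed

lemma block_entropy_limit: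
  assumes \<alpha>: "fin_meas_partition M \<alpha>"
  shows "(\<lambda>n. block_entropy M T \<alpha> n / n) \<longlonglongrightarrow> ks_entropy_part M T \<alpha>"
proof -
  have "convergent (\<lambda>n. block_entropy M T \<alpha> n / n)"
    using block_entropy_subadditive[OF \<alpha>]
    by (intro subadditive_convergent) (simp_all add: block_entropy_def part_entropy_nonneg)
  thus ?thesis unfolding ks_entropy_part_def block_entropy_def by (simp add: convergent_LIMSEQ_iff)
qed

lemma sample_entropy_sum_subadditive:
  assumes \<alpha>: "fin_meas_partition M \<alpha>"
  shows "sample_entropy_sum M T \<alpha> (m + n) \<le> sample_entropy_sum M T \<alpha> m + sample_entropy_sum M T \<alpha> n"
proof -
  define H where "H S = part_entropy M (part_join M T \<alpha> S)" for S
  define w :: real where "w = 1 / 2 ^ (m + n)"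
  let ?merge = "\<lambda>(S1, S2). S1 \<union> (\<lambda>i. i + m) ` S2"
  have "sample_entropy_sum M T \<alpha> (m + n) = (\<Sum>x\<in>Pow {..<m} \<times> Pow {..<n}. w * H (?merge x))"
    unfolding sample_entropy_sum_def H_def w_def
    by (rule sum.reindex_bij_betw[OF bij_betw_Pow_lessThan_add, symmetric])
  also have "\<dots> \<le> (\<Sum>x\<in>Pow {..<m} \<times> Pow {..<n}. w * H (fst x) + w * H (snd x))"
  proof (rule sum_mono)
    fix x assume "x \<in> Pow {..<m} \<times> Pow {..<n}"
    then obtain S1 S2 where x: "x = (S1, S2)" "S1 \<subseteq> {..<m}" "S2 \<subseteq> {..<n}" by auto
    hence "finite S1" "finite S2" by (auto intro: finite_subset)
    hence "H (S1 \<union> (\<lambda>i. i + m) ` S2) \<le> H S1 + H S2"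
      unfolding H_def using part_entropy_part_join_Un[OF \<alpha>] part_entropy_part_join_shift[OF \<alpha>]
      by (metis finite_imageI)
    hence "w * H (S1 \<union> (\<lambda>i. i + m) ` S2) \<le> w * (H S1 + H S2)"
      unfolding w_def by (intro mult_left_mono) auto
    thus "w * H (?merge x) \<le> w * H (fst x) + w * H (snd x)" using x by (simp add: distrib_left)
  qed
  also have "\<dots> = (\<Sum>S1\<in>Pow {..<m}. \<Sum>S2\<in>Pow {..<n}. w * H S1)
      + (\<Sum>S1\<in>Pow {..<m}. \<Sum>S2\<in>Pow {..<n}. w * H S2)"
    unfolding sum.distrib sum.cartesian_product by (simp only: case_prod_beta')
  also have "(\<Sum>S1\<in>Pow {..<m}. \<Sum>S2\<in>Pow {..<n}. w * H S1) = sample_entropy_sum M T \<alpha> m"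
    unfolding sample_entropy_sum_def H_def w_def by (simp add: card_Pow power_add)
  also have "(\<Sum>S1\<in>Pow {..<m}. \<Sum>S2\<in>Pow {..<n}. w * H S2) = sample_entropy_sum M T \<alpha> n"
    unfolding sample_entropy_sum_def H_def w_def by (simp add: card_Pow power_add sum_distrib_left)
  finally show ?thesis .
qed

lemma sample_entropy_sum_limit:
  assumes \<alpha>: "fin_meas_partition M \<alpha>"
  shows "(\<lambda>n. sample_entropy_sum M T \<alpha> n / n) \<longlonglongrightarrow> Asc M \<alpha> T"
proof -
  have "convergent (\<lambda>n. sample_entropy_sum M T \<alpha> n / n)"
    using sample_entropy_sum_subadditive[OF \<alpha>]
    by (intro subadditive_convergent)
       (simp_all add: sample_entropy_sum_def sum_nonneg part_entropy_nonneg)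
  moreover have "(\<lambda>n. sample_entropy_sum M T \<alpha> n / n)
      = (\<lambda>n. (1 / real n) * (\<Sum>S\<in>Pow {..<n}. (1 / 2 ^ n) * part_entropy M (part_join M T \<alpha> S)))"
    unfolding sample_entropy_sum_def by simp
  ultimately show ?thesis unfolding Asc_def by (simp add: convergent_LIMSEQ_iff)
qed

lemma Asc_le_ks_entropy_part:
  assumes \<alpha>: "fin_meas_partition M \<alpha>"
  shows "Asc M \<alpha> T \<le> ks_entropy_part M T \<alpha>"
proof (rule LIMSEQ_le[OF sample_entropy_sum_limit[OF \<alpha>] block_entropy_limit[OF \<alpha>]])
  have "sample_entropy_sum M T \<alpha> n \<le> (\<Sum>S\<in>Pow {..<n}. (1 / 2 ^ n) * block_entropy M T \<alpha> n)" for n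
    unfolding sample_entropy_sum_def block_entropy_def
    by (intro sum_mono mult_left_mono part_entropy_part_join_mono[OF \<alpha>]) auto
  hence "sample_entropy_sum M T \<alpha> n \<le> block_entropy M T \<alpha> n" for n by (simp add: card_Pow)
  thus "\<exists>N. \<forall>n\<ge>N. sample_entropy_sum M T \<alpha> n / n \<le> block_entropy M T \<alpha> n / n"
    by (intro exI[of _ 0] allI impI divide_right_mono) auto
qed

lemma block_entropy_le_sample_entropy_sum:
  assumes \<alpha>: "fin_meas_partition M \<alpha>"
  shows "block_entropy M T \<alpha> n
           \<le> sample_entropy_sum M T (part_join M T \<alpha> {..<k}) n + part_entropy M \<alpha> * (k + n / 2 ^ k)"
proof -
  let ?\<beta> = "part_join M T \<alpha> {..<k}"
  define covered where "covered S = (\<lambda>(s, j). s + j) ` (S \<times> {..<k})" for S :: "nat set"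
  define D where "D S = {..<n} - covered S" for S
  have each: "block_entropy M T \<alpha> n
      \<le> part_entropy M (part_join M T ?\<beta> S) + card (D S) * part_entropy M \<alpha>"
    if "S \<subseteq> {..<n}" for S
  proof -
    have "finite S" using that finite_subset by blast
    hence "block_entropy M T \<alpha> n \<le> part_entropy M (part_join M T \<alpha> (covered S \<union> D S))"
      unfolding block_entropy_def covered_def D_def
      by (intro part_entropy_part_join_mono[OF \<alpha>]) auto
    also have "\<dots> \<le> part_entropy M (part_join M T \<alpha> (covered S)) + part_entropy M (part_join M T \<alpha> (D S))"
      using \<open>finite S\<close> unfolding covered_def D_def by (intro part_entropy_part_join_Un[OF \<alpha>]) auto
    also have "\<dots> \<le> part_entropy M (part_join M T ?\<beta> S) + card (D S) * part_entropy M \<alpha>"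
      using \<open>finite S\<close> unfolding covered_def D_def
      by (intro add_mono part_entropy_part_join_sumset_le[OF \<alpha>] part_entropy_part_join_le_card[OF \<alpha>]) auto
    finally show ?thesis .
  qed
  have "block_entropy M T \<alpha> n = (\<Sum>S\<in>Pow {..<n}. (1 / 2 ^ n) * block_entropy M T \<alpha> n)"
    by (simp add: card_Pow)
  also have "\<dots> \<le> (\<Sum>S\<in>Pow {..<n}. (1 / 2 ^ n) *
      (part_entropy M (part_join M T ?\<beta> S) + card (D S) * part_entropy M \<alpha>))"
    using each by (intro sum_mono mult_left_mono) auto
  also have "\<dots> = sample_entropy_sum M T ?\<beta> n
      + (1 / 2 ^ n) * part_entropy M \<alpha> * (\<Sum>S\<in>Pow {..<n}. real (card (D S)))"
    unfolding sample_entropy_sum_def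
    by (simp add: distrib_left sum.distrib sum_distrib_left sum_divide_distrib mult.commute)
  also have "\<dots> \<le> sample_entropy_sum M T ?\<beta> n
      + (1 / 2 ^ n) * part_entropy M \<alpha> * (k * 2 ^ n + n * 2 ^ n / 2 ^ k)"
    using sum_card_uncovered_le[of n k] part_entropy_nonneg unfolding D_def covered_def
    by (intro add_left_mono mult_left_mono) auto
  also have "\<dots> = sample_entropy_sum M T ?\<beta> n + part_entropy M \<alpha> * (k + n / 2 ^ k)"
    by (simp add: field_simps)
  finally show ?thesis .
qed

lemma ks_entropy_part_le_Asc_block:
  assumes \<alpha>: "fin_meas_partition M \<alpha>"
  shows "ks_entropy_part M T \<alpha> - part_entropy M \<alpha> / 2 ^ k \<le> Asc M (part_join M T \<alpha> {..<k}) T"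
proof -
  let ?\<beta> = "part_join M T \<alpha> {..<k}" and ?H = "part_entropy M \<alpha>"
  have \<beta>: "fin_meas_partition M ?\<beta>" by (rule fin_meas_partition_part_join[OF \<alpha>]) simp
  have "(\<lambda>n. block_entropy M T \<alpha> n / n - ?H * k / n - ?H / 2 ^ k)
      \<longlonglongrightarrow> ks_entropy_part M T \<alpha> - 0 - ?H / 2 ^ k"
    by (intro tendsto_diff block_entropy_limit[OF \<alpha>] lim_const_over_n tendsto_const)
  moreover have "block_entropy M T \<alpha> n / n - ?H * k / n - ?H / 2 ^ k \<le> sample_entropy_sum M T ?\<beta> n / n"
    if "n \<ge> 1" for n
  proof -
    have "block_entropy M T \<alpha> n / n \<le> (sample_entropy_sum M T ?\<beta> n + ?H * (k + n / 2 ^ k)) / n"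
      using block_entropy_le_sample_entropy_sum[OF \<alpha>, of n k] by (intro divide_right_mono) auto
    also have "\<dots> = sample_entropy_sum M T ?\<beta> n / n + ?H * k / n + ?H / 2 ^ k"
      using that by (simp add: field_simps)
    finally show ?thesis by simp
  qed
  ultimately show ?thesis
    using LIMSEQ_le[OF _ sample_entropy_sum_limit[OF \<beta>]] by force
qed

lemma ks_entropy_part_le_SUP_Asc:
  assumes \<alpha>: "fin_meas_partition M \<alpha>"
  shows "ereal (ks_entropy_part M T \<alpha>) \<le> (SUP \<beta>\<in>{\<beta>. fin_meas_partition M \<beta>}. ereal (Asc M \<beta> T))"
proof (rule ereal_le_epsilon2)
  fix e :: real assume "e > 0"
  obtain k :: nat where "part_entropy M \<alpha> / e < 2 ^ k" using real_arch_pow[of 2] by auto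
  hence "part_entropy M \<alpha> < e * 2 ^ k" using \<open>e > 0\<close> by (simp add: field_simps)
  hence small: "part_entropy M \<alpha> / 2 ^ k < e" by (simp add: field_simps)
  have "fin_meas_partition M (part_join M T \<alpha> {..<k})"
    by (rule fin_meas_partition_part_join[OF \<alpha>]) simp
  hence upper: "ereal (Asc M (part_join M T \<alpha> {..<k}) T) \<le> (SUP \<beta>\<in>{\<beta>. fin_meas_partition M \<beta>}. ereal (Asc M \<beta> T))"
    by (intro SUP_upper) simp
  have "ks_entropy_part M T \<alpha> \<le> Asc M (part_join M T \<alpha> {..<k}) T + e"
    using ks_entropy_part_le_Asc_block[OF \<alpha>, of k] small by simp
  hence "ereal (ks_entropy_part M T \<alpha>) \<le> ereal (Asc M (part_join M T \<alpha> {..<k}) T) + ereal e" by simp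
  also have "\<dots> \<le> (SUP \<beta>\<in>{\<beta>. fin_meas_partition M \<beta>}. ereal (Asc M \<beta> T)) + ereal e"
    using upper by (rule add_right_mono)
  finally show "ereal (ks_entropy_part M T \<alpha>) \<le> (SUP \<beta>\<in>{\<beta>. fin_meas_partition M \<beta>}. ereal (Asc M \<beta> T)) + e" .
qed

end

theorem theorem5p6:
  assumes "mps M T"
  shows "(SUP \<alpha>\<in>{\<alpha>. fin_meas_partition M \<alpha>}. ereal (Asc M \<alpha> T)) = ks_entropy M T"
proof -
  interpret mps_system M T by (rule mps_system.intro[OF assms])
  show ?thesis unfolding ks_entropy_def
  proof (rule antisym)
    show "(SUP \<alpha>\<in>{\<alpha>. fin_meas_partition M \<alpha>}. ereal (Asc M \<alpha> T))
        \<le> (SUP \<alpha>\<in>{\<alpha>. fin_meas_partition M \<alpha>}. ereal (ks_entropy_part M T \<alpha>))"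
      by (rule SUP_mono) (auto intro: Asc_le_ks_entropy_part)
    show "(SUP \<alpha>\<in>{\<alpha>. fin_meas_partition M \<alpha>}. ereal (ks_entropy_part M T \<alpha>))
        \<le> (SUP \<alpha>\<in>{\<alpha>. fin_meas_partition M \<alpha>}. ereal (Asc M \<alpha> T))"
      by (rule SUP_least) (simp add: ks_entropy_part_le_SUP_Asc)
  qed
qed

end
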